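(* Any cut-free derivation of a linguistically marked {\bf MLL1} sequent is linguistically marked (i.e. all sequents occurring in it are linguistically marked).
   Context: {\bf MLL1}: formulas built from atomic $p(x_1,\ldots,x_n)$ ($p$ positive or negative predicate symbol) by tensor $\otimes$, par $\wp$, $\forall x$, $\exists x$; sequent calculus rules: $\vdash\overline A,A$ for atomic $A$, Cut, $(\wp)$: $\vdash\Gamma,A,B\Rightarrow\vdash\Gamma,A\wp B$, $(\otimes)$: $\vdash\Gamma,A$, $\vdash B,\Theta\Rightarrow\vdash\Gamma,A\otimes B,\Theta$, $(\forall)$: $\vdash\Gamma,A[v/x]$, $v\notin FV(\Gamma)\Rightarrow\vdash\Gamma,\forall xA$, $(\exists)$: $\vdash\Gamma,A[v/x]\Rightarrow\vdash\Gamma,\exists xA$. In a linguistically marked language, each $n$-ary predicate symbol $p$ has a valency $(k,n-k)$ with $v(\overline p)=(n-k,k)$; the first $k$ argument occurrences of $p(x_1,\ldots,x_n)$ have left polarity and the rest right polarity, and polarity of an occurrence in a compound formula, context or sequent is inherited from the atomic formula containing it. A formula, context or sequent is linguistically marked if every quantifier binds exactly one left and one right variable occurrence. *)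

theory Defs
  imports Main "HOL-Library.Multiset"
begin

text \<open>Atomic formulas are p(x1,...,xn) with p a positive (True) or negative (False)
  predicate symbol and the arguments variables.\<close>

datatype ('p, 'v) fm =
    Atom bool 'p "'v list"
  | Tens "('p, 'v) fm" "('p, 'v) fm"
  | Par "('p, 'v) fm" "('p, 'v) fm"
  | All 'v "('p, 'v) fm"
  | Ex 'v "('p, 'v) fm"

fun dual :: "('p, 'v) fm \<Rightarrow> ('p, 'v) fm" where
  "dual (Atom b p xs) = Atom (\<not> b) p xs"
| "dual (Tens A B) = Par (dual A) (dual B)"
| "dual (Par A B) = Tens (dual A) (dual B)"
| "dual (All x A) = Ex x (dual A)"
| "dual (Ex x A) = All x (dual A)"

fun is_atom :: "('p, 'v) fm \<Rightarrow> bool" where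
  "is_atom (Atom _ _ _) = True"
| "is_atom _ = False"

fun FV :: "('p, 'v) fm \<Rightarrow> 'v set" where
  "FV (Atom b p xs) = set xs"
| "FV (Tens A B) = FV A \<union> FV B"
| "FV (Par A B) = FV A \<union> FV B"
| "FV (All x A) = FV A - {x}"
| "FV (Ex x A) = FV A - {x}"

definition FV_seq :: "('p, 'v) fm multiset \<Rightarrow> 'v set" where
  "FV_seq \<Gamma> = (\<Union>A\<in>set_mset \<Gamma>. FV A)"

fun subst :: "'v \<Rightarrow> 'v \<Rightarrow> ('p, 'v) fm \<Rightarrow> ('p, 'v) fm" where
  "subst v x (Atom b p xs) = Atom b p (map (\<lambda>y. if y = x then v else y) xs)"
| "subst v x (Tens A B) = Tens (subst v x A) (subst v x B)"
| "subst v x (Par A B) = Par (subst v x A) (subst v x B)"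
| "subst v x (All y A) = (if y = x then All y A else All y (subst v x A))"
| "subst v x (Ex y A) = (if y = x then Ex y A else Ex y (subst v x A))"

fun free_for :: "'v \<Rightarrow> 'v \<Rightarrow> ('p, 'v) fm \<Rightarrow> bool" where
  "free_for v x (Atom b p xs) = True"
| "free_for v x (Tens A B) = (free_for v x A \<and> free_for v x B)"
| "free_for v x (Par A B) = (free_for v x A \<and> free_for v x B)"
| "free_for v x (All y A) = (y = x \<or> ((x \<notin> FV A \<or> y \<noteq> v) \<and> free_for v x A))"
| "free_for v x (Ex y A) = (y = x \<or> ((x \<notin> FV A \<or> y \<noteq> v) \<and> free_for v x A))"

text \<open>A linguistically marked language: every predicate symbol p has an arity ar p
  and valency (k p, ar p - k p); the negative symbol overline p has valency
  (ar p - k p, k p).  nleft k ar b p is the number of left-polarity argument places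
  of the atom with symbol p and sign b.\<close>

definition nleft :: "('p \<Rightarrow> nat) \<Rightarrow> ('p \<Rightarrow> nat) \<Rightarrow> bool \<Rightarrow> 'p \<Rightarrow> nat" where
  "nleft k ar b p = (if b then k p else ar p - k p)"

fun lcnt :: "('p \<Rightarrow> nat) \<Rightarrow> ('p \<Rightarrow> nat) \<Rightarrow> 'v \<Rightarrow> ('p, 'v) fm \<Rightarrow> nat" where
  "lcnt k ar x (Atom b p xs) = card {i. i < length xs \<and> i < nleft k ar b p \<and> xs ! i = x}"
| "lcnt k ar x (Tens A B) = lcnt k ar x A + lcnt k ar x B"
| "lcnt k ar x (Par A B) = lcnt k ar x A + lcnt k ar x B"
| "lcnt k ar x (All y A) = (if y = x then 0 else lcnt k ar x A)"
| "lcnt k ar x (Ex y A) = (if y = x then 0 else lcnt k ar x A)"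

fun rcnt :: "('p \<Rightarrow> nat) \<Rightarrow> ('p \<Rightarrow> nat) \<Rightarrow> 'v \<Rightarrow> ('p, 'v) fm \<Rightarrow> nat" where
  "rcnt k ar x (Atom b p xs) = card {i. i < length xs \<and> nleft k ar b p \<le> i \<and> xs ! i = x}"
| "rcnt k ar x (Tens A B) = rcnt k ar x A + rcnt k ar x B"
| "rcnt k ar x (Par A B) = rcnt k ar x A + rcnt k ar x B"
| "rcnt k ar x (All y A) = (if y = x then 0 else rcnt k ar x A)"
| "rcnt k ar x (Ex y A) = (if y = x then 0 else rcnt k ar x A)"

fun lmarked :: "('p \<Rightarrow> nat) \<Rightarrow> ('p \<Rightarrow> nat) \<Rightarrow> ('p, 'v) fm \<Rightarrow> bool" where
  "lmarked k ar (Atom b p xs) = True"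
| "lmarked k ar (Tens A B) = (lmarked k ar A \<and> lmarked k ar B)"
| "lmarked k ar (Par A B) = (lmarked k ar A \<and> lmarked k ar B)"
| "lmarked k ar (All x A) = (lcnt k ar x A = 1 \<and> rcnt k ar x A = 1 \<and> lmarked k ar A)"
| "lmarked k ar (Ex x A) = (lcnt k ar x A = 1 \<and> rcnt k ar x A = 1 \<and> lmarked k ar A)"

definition lmarked_seq :: "('p \<Rightarrow> nat) \<Rightarrow> ('p \<Rightarrow> nat) \<Rightarrow> ('p, 'v) fm multiset \<Rightarrow> bool" where
  "lmarked_seq k ar \<Gamma> = (\<forall>A\<in>#\<Gamma>. lmarked k ar A)"

fun wf_fm :: "('p \<Rightarrow> nat) \<Rightarrow> ('p, 'v) fm \<Rightarrow> bool" where
  "wf_fm ar (Atom b p xs) = (length xs = ar p)"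
| "wf_fm ar (Tens A B) = (wf_fm ar A \<and> wf_fm ar B)"
| "wf_fm ar (Par A B) = (wf_fm ar A \<and> wf_fm ar B)"
| "wf_fm ar (All x A) = wf_fm ar A"
| "wf_fm ar (Ex x A) = wf_fm ar A"

definition wf_seq :: "('p \<Rightarrow> nat) \<Rightarrow> ('p, 'v) fm multiset \<Rightarrow> bool" where
  "wf_seq ar \<Gamma> = (\<forall>A\<in>#\<Gamma>. wf_fm ar A)"

datatype rule = RAx | RCut | RPar | RTens | RAll | REx

datatype ('p, 'v) dtree = Node "('p, 'v) fm multiset" rule "('p, 'v) dtree list"

fun concl :: "('p, 'v) dtree \<Rightarrow> ('p, 'v) fm multiset" where
  "concl (Node \<Gamma> r ds) = \<Gamma>"

inductive deriv :: "('p, 'v) dtree \<Rightarrow> bool" where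
  ax: "is_atom A \<Longrightarrow> deriv (Node {#dual A, A#} RAx [])"
| cut: "deriv d1 \<Longrightarrow> deriv d2 \<Longrightarrow> concl d1 = \<Gamma> + {#A#} \<Longrightarrow> concl d2 = {#dual A#} + \<Theta>
        \<Longrightarrow> deriv (Node (\<Gamma> + \<Theta>) RCut [d1, d2])"
| par: "deriv d \<Longrightarrow> concl d = \<Gamma> + {#A, B#} \<Longrightarrow> deriv (Node (\<Gamma> + {#Par A B#}) RPar [d])"
| tens: "deriv d1 \<Longrightarrow> deriv d2 \<Longrightarrow> concl d1 = \<Gamma> + {#A#} \<Longrightarrow> concl d2 = {#B#} + \<Theta>
        \<Longrightarrow> deriv (Node (\<Gamma> + {#Tens A B#} + \<Theta>) RTens [d1, d2])"
| all: "deriv d \<Longrightarrow> free_for v x A \<Longrightarrow> concl d = \<Gamma> + {#subst v x A#} \<Longrightarrow> v \<notin> FV_seq \<Gamma>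
        \<Longrightarrow> deriv (Node (\<Gamma> + {#All x A#}) RAll [d])"
| ex: "deriv d \<Longrightarrow> free_for v x A \<Longrightarrow> concl d = \<Gamma> + {#subst v x A#}
        \<Longrightarrow> deriv (Node (\<Gamma> + {#Ex x A#}) REx [d])"

fun cut_free :: "('p, 'v) dtree \<Rightarrow> bool" where
  "cut_free (Node \<Gamma> r ds) = (r \<noteq> RCut \<and> (\<forall>d\<in>set ds. cut_free d))"

fun sequents_of :: "('p, 'v) dtree \<Rightarrow> ('p, 'v) fm multiset set" where
  "sequents_of (Node \<Gamma> r ds) = insert \<Gamma> (\<Union>d\<in>set ds. sequents_of d)"

end

theory Submission
  imports Defs
begin

text \<open>In every rule other than cut, each formula of a premise is a formula of the
  conclusion, an immediate subformula of one, or an instance A[v/x] of the body of a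
  quantified formula of the conclusion. Markedness passes to subformulas, and it passes to
  A[v/x] because v is free for x: the substitution leaves the occurrences of every other
  bound variable y untouched, and y is never v where x occurs free. Markedness is a
  property of each formula separately.\<close>

lemma subst_not_free: "x \<notin> FV A \<Longrightarrow> subst v x A = A"
  by (induction A) (auto intro!: map_idI)

lemma lcnt_subst_other: "y \<noteq> x \<Longrightarrow> y \<noteq> v \<Longrightarrow> lcnt k ar y (subst v x A) = lcnt k ar y A"
  by (induction A) (auto intro!: arg_cong[where f = card])

lemma rcnt_subst_other: "y \<noteq> x \<Longrightarrow> y \<noteq> v \<Longrightarrow> rcnt k ar y (subst v x A) = rcnt k ar y A"
  by (induction A) (auto intro!: arg_cong[where f = card])

lemma lmarked_subst: "lmarked k ar A \<Longrightarrow> free_for v x A \<Longrightarrow> lmarked k ar (subst v x A)"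
  by (induction A) (auto simp: lcnt_subst_other rcnt_subst_other subst_not_free)

lemma lmarked_seq_add_mset [simp]:
  "lmarked_seq k ar (add_mset A \<Gamma>) \<longleftrightarrow> lmarked k ar A \<and> lmarked_seq k ar \<Gamma>"
  by (simp add: lmarked_seq_def)

lemma lmarked_seq_union [simp]:
  "lmarked_seq k ar (\<Gamma> + \<Delta>) \<longleftrightarrow> lmarked_seq k ar \<Gamma> \<and> lmarked_seq k ar \<Delta>"
  by (auto simp: lmarked_seq_def)

lemma cut_free_deriv_lmarked:
  assumes "deriv d" and "cut_free d" and "lmarked_seq k ar (concl d)"
  shows "\<forall>\<Gamma>\<in>sequents_of d. lmarked_seq k ar \<Gamma>"
  using assms
proof (induction rule: deriv.induct)
  case (ax A)
  then show ?case by simp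
next
  case (cut d1 d2 \<Gamma> A \<Theta>)
  then show ?case by simp
next
  case (par d \<Gamma> A B)
  have "lmarked_seq k ar (concl d)"
    using par.hyps(2) par.prems(2) by simp
  with par.IH par.prems show ?case by simp
next
  case (tens d1 d2 \<Gamma> A B \<Theta>)
  have "lmarked_seq k ar (concl d1)" and "lmarked_seq k ar (concl d2)"
    using tens.hyps(3,4) tens.prems(2) by simp_all
  with tens.IH tens.prems show ?case by auto
next
  case (all d v x A \<Gamma>)
  have "lmarked_seq k ar (concl d)"
    using all.hyps(2,3) all.prems(2) by (simp add: lmarked_subst)
  with all.IH all.prems show ?case by simp
next
  case (ex d v x A \<Gamma>)
  have "lmarked_seq k ar (concl d)"
    using ex.hyps(2,3) ex.prems(2) by (simp add: lmarked_subst)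
  with ex.IH ex.prems show ?case by simp
qed

theorem proposition3p4:
  fixes k ar :: "'p \<Rightarrow> nat" and d :: "('p, 'v) dtree"
  assumes "\<forall>p. k p \<le> ar p"
    and "deriv d"
    and "cut_free d"
    and "wf_seq ar (concl d)"
    and "lmarked_seq k ar (concl d)"
  shows "\<forall>\<Gamma>\<in>sequents_of d. lmarked_seq k ar \<Gamma>"
  using cut_free_deriv_lmarked assms(2,3,5) .

end
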